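(* Let $G$ be a finite, connected, simple $3$-regular graph on more than $6$ vertices that is $4$-ordered. Then every vertex of $G$ has exactly $6$ vertices at distance $2$ from it.
   Context: A simple graph $G$ is called $k$-ordered if for every sequence $v_1,\ldots,v_k$ of $k$ distinct vertices of $G$ there exists a cycle in $G$ containing these $k$ vertices in the specified (cyclic) order. Distance is the usual graph distance (length of a shortest path). *)

theory Defs
  imports Main "HOL-Library.Sublist"
begin

definition simple_graph :: "'a set \<Rightarrow> ('a \<Rightarrow> 'a \<Rightarrow> bool) \<Rightarrow> bool" where
  "simple_graph V E \<longleftrightarrow> finite V \<and> (\<forall>x y. E x y \<longrightarrow> x \<in> V \<and> y \<in> V)
     \<and> (\<forall>x y. E x y \<longrightarrow> E y x) \<and> (\<forall>x. \<not> E x x)"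

definition degree :: "'a set \<Rightarrow> ('a \<Rightarrow> 'a \<Rightarrow> bool) \<Rightarrow> 'a \<Rightarrow> nat" where
  "degree V E v = card {u \<in> V. E v u}"

definition regular :: "'a set \<Rightarrow> ('a \<Rightarrow> 'a \<Rightarrow> bool) \<Rightarrow> nat \<Rightarrow> bool" where
  "regular V E r \<longleftrightarrow> (\<forall>v\<in>V. degree V E v = r)"

(* A walk given as its list of vertices; its length is the number of edges. *)
definition is_walk :: "('a \<Rightarrow> 'a \<Rightarrow> bool) \<Rightarrow> 'a list \<Rightarrow> bool" where
  "is_walk E p \<longleftrightarrow> p \<noteq> [] \<and> (\<forall>i. Suc i < length p \<longrightarrow> E (p ! i) (p ! Suc i))"

definition walk_between :: "'a set \<Rightarrow> ('a \<Rightarrow> 'a \<Rightarrow> bool) \<Rightarrow> 'a \<Rightarrow> 'a \<Rightarrow> 'a list \<Rightarrow> bool" where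
  "walk_between V E u v p \<longleftrightarrow> is_walk E p \<and> set p \<subseteq> V \<and> hd p = u \<and> last p = v"

definition connected :: "'a set \<Rightarrow> ('a \<Rightarrow> 'a \<Rightarrow> bool) \<Rightarrow> bool" where
  "connected V E \<longleftrightarrow> (\<forall>u\<in>V. \<forall>v\<in>V. \<exists>p. walk_between V E u v p)"

definition dist :: "'a set \<Rightarrow> ('a \<Rightarrow> 'a \<Rightarrow> bool) \<Rightarrow> 'a \<Rightarrow> 'a \<Rightarrow> nat" where
  "dist V E u v = (LEAST n. \<exists>p. walk_between V E u v p \<and> length p = Suc n)"

definition is_cycle :: "'a set \<Rightarrow> ('a \<Rightarrow> 'a \<Rightarrow> bool) \<Rightarrow> 'a list \<Rightarrow> bool" where
  "is_cycle V E c \<longleftrightarrow> length c \<ge> 3 \<and> distinct c \<and> set c \<subseteq> V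
     \<and> (\<forall>i < length c. E (c ! i) (c ! ((Suc i) mod length c)))"

definition cycle_contains_in_order :: "'a list \<Rightarrow> 'a list \<Rightarrow> bool" where
  "cycle_contains_in_order c vs \<longleftrightarrow> (\<exists>r. subseq vs (rotate r c))"

definition k_ordered :: "'a set \<Rightarrow> ('a \<Rightarrow> 'a \<Rightarrow> bool) \<Rightarrow> nat \<Rightarrow> bool" where
  "k_ordered V E k \<longleftrightarrow> (\<forall>vs. length vs = k \<and> distinct vs \<and> set vs \<subseteq> V \<longrightarrow>
      (\<exists>c. is_cycle V E c \<and> cycle_contains_in_order c vs))"

end

theory Submission
  imports Defs
begin

(*
  In a 4-ordered graph every vertex set S with two vertices x, y inside and two vertices
  p, q outside is left by at least four edges: a cycle through x, p, y, q in this order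
  crosses the boundary of S between any two consecutive of them. In a cubic graph on more
  than six vertices, a triangle, or two vertices with three common neighbours, would be a
  set of at most five vertices left by only three edges. A 4-cycle v a w b in which the
  third neighbours v' of v and w' of w differ is excluded directly: a cycle through
  v, w, v', w' in this order leaves v in both directions and w forwards, each time into
  {a, b}, at three distinct cycle vertices. So the graph has girth at least 5, and the
  3 * 2 vertices at the end of a path of length 2 from v are distinct and at distance 2.
*)

lemma simple_graph_sym: "simple_graph V E \<Longrightarrow> E x y \<Longrightarrow> E y x"
  by (simp add: simple_graph_def)

lemma simple_graph_edge_in_vertices: "simple_graph V E \<Longrightarrow> E x y \<Longrightarrow> x \<in> V \<and> y \<in> V"
  by (simp add: simple_graph_def)

definition neighbours :: "'a set \<Rightarrow> ('a \<Rightarrow> 'a \<Rightarrow> bool) \<Rightarrow> 'a \<Rightarrow> 'a set" where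
  "neighbours V E v = {u \<in> V. E v u}"

lemma mem_neighbours_iff: "simple_graph V E \<Longrightarrow> u \<in> neighbours V E v \<longleftrightarrow> E v u"
  by (auto simp: neighbours_def simple_graph_def)

lemma card_neighbours_regular: "regular V E r \<Longrightarrow> v \<in> V \<Longrightarrow> card (neighbours V E v) = r"
  by (simp add: regular_def degree_def neighbours_def)

lemma walk_of_length_0_iff:
  "(\<exists>p. walk_between V E v u p \<and> length p = 1) \<longleftrightarrow> v = u \<and> v \<in> V"
proof
  assume "\<exists>p. walk_between V E v u p \<and> length p = 1"
  then obtain s where "walk_between V E v u [s]" by (auto simp: length_Suc_conv)
  then show "v = u \<and> v \<in> V" by (auto simp: walk_between_def)
next
  assume "v = u \<and> v \<in> V"
  then have "walk_between V E v u [v]" by (auto simp: walk_between_def is_walk_def)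
  then show "\<exists>p. walk_between V E v u p \<and> length p = 1" by (intro exI[of _ "[v]"]) simp
qed

lemma walk_of_length_1_iff:
  assumes "simple_graph V E"
  shows "(\<exists>p. walk_between V E v u p \<and> length p = 2) \<longleftrightarrow> E v u"
proof
  assume "\<exists>p. walk_between V E v u p \<and> length p = 2"
  then obtain s t where "walk_between V E v u [s, t]"
    by (auto simp: length_Suc_conv numeral_2_eq_2)
  then have "s = v" "t = u" "E ([s, t] ! 0) ([s, t] ! Suc 0)"
    unfolding walk_between_def is_walk_def by auto
  then show "E v u" by simp
next
  assume "E v u"
  then have "walk_between V E v u [v, u]"
    using simple_graph_edge_in_vertices[OF assms] by (simp add: walk_between_def is_walk_def)
  then show "\<exists>p. walk_between V E v u p \<and> length p = 2" by (intro exI[of _ "[v, u]"]) simp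
qed

lemma walk_of_length_2_iff:
  assumes "simple_graph V E"
  shows "(\<exists>p. walk_between V E v u p \<and> length p = 3) \<longleftrightarrow> (\<exists>z. E v z \<and> E z u)"
proof
  assume "\<exists>p. walk_between V E v u p \<and> length p = 3"
  then obtain s z t where "walk_between V E v u [s, z, t]"
    by (auto simp: length_Suc_conv numeral_3_eq_3)
  then have "s = v" "t = u" "E ([s, z, t] ! 0) ([s, z, t] ! 1)" "E ([s, z, t] ! 1) ([s, z, t] ! 2)"
    unfolding walk_between_def is_walk_def by auto
  then show "\<exists>z. E v z \<and> E z u" by auto
next
  assume "\<exists>z. E v z \<and> E z u"
  then obtain z where "E v z" "E z u" by blast
  then have "walk_between V E v u [v, z, u]"
    using simple_graph_edge_in_vertices[OF assms]
    by (simp add: walk_between_def is_walk_def less_Suc_eq numeral_3_eq_3)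
  then show "\<exists>p. walk_between V E v u p \<and> length p = 3" by (intro exI[of _ "[v, z, u]"]) simp
qed

lemma dist_eq_2_iff:
  assumes G: "simple_graph V E" and "connected V E" "v \<in> V" "u \<in> V"
  shows "dist V E v u = 2 \<longleftrightarrow> u \<noteq> v \<and> \<not> E v u \<and> (\<exists>z. E v z \<and> E z u)"
proof -
  let ?walk = "\<lambda>n. \<exists>p. walk_between V E v u p \<and> length p = Suc n"
  have walk_0: "?walk 0 \<longleftrightarrow> u = v" and walk_1: "?walk 1 \<longleftrightarrow> E v u"
    and walk_2: "?walk 2 \<longleftrightarrow> (\<exists>z. E v z \<and> E z u)"
    using walk_of_length_0_iff[of V E v u] walk_of_length_1_iff[OF G, of v u]
      walk_of_length_2_iff[OF G, of v u] \<open>v \<in> V\<close> by auto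
  obtain p where p: "walk_between V E v u p" using assms(2-4) unfolding connected_def by blast
  then have "?walk (length p - 1)" by (auto simp: walk_between_def is_walk_def)
  then have walk_dist: "?walk (dist V E v u)" unfolding dist_def by (rule LeastI)
  have dist_le: "dist V E v u \<le> n" if "?walk n" for n
    unfolding dist_def using that by (rule Least_le)
  show ?thesis
  proof
    assume "dist V E v u = 2"
    then show "u \<noteq> v \<and> \<not> E v u \<and> (\<exists>z. E v z \<and> E z u)"
      using walk_dist dist_le[of 0] dist_le[of 1] walk_0 walk_1 walk_2 by auto
  next
    assume "u \<noteq> v \<and> \<not> E v u \<and> (\<exists>z. E v z \<and> E z u)"
    then have "dist V E v u \<le> 2" "dist V E v u \<noteq> 0" "dist V E v u \<noteq> 1"
      using walk_dist dist_le[of 2] walk_0 walk_1 walk_2 by auto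
    then show "dist V E v u = 2" by linarith
  qed
qed

lemma card_dist_2_regular_girth_ge_5:
  assumes G: "simple_graph V E" and "connected V E" "regular V E r" "v \<in> V"
    and triangle_free: "\<And>x y z. E x y \<Longrightarrow> E y z \<Longrightarrow> \<not> E x z"
    and unique_common_neighbour:
      "\<And>x y a b. x \<noteq> y \<Longrightarrow> E x a \<Longrightarrow> E y a \<Longrightarrow> E x b \<Longrightarrow> E y b \<Longrightarrow> a = b"
  shows "card {u \<in> V. dist V E v u = 2} = r * (r - 1)"
proof -
  let ?N = "neighbours V E"
  have N_iff: "u \<in> ?N x \<longleftrightarrow> E x u" for x u using mem_neighbours_iff[OF G] .
  have fin: "finite V" using G by (simp add: simple_graph_def)
  have "u \<in> V \<and> dist V E v u = 2 \<longleftrightarrow> u \<in> (\<Union>z \<in> ?N v. ?N z - {v})" for u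
  proof (cases "u \<in> V")
    case True
    have "dist V E v u = 2 \<longleftrightarrow> u \<noteq> v \<and> \<not> E v u \<and> (\<exists>z. E v z \<and> E z u)"
      using dist_eq_2_iff[OF G assms(2,4) True] .
    also have "\<dots> \<longleftrightarrow> (\<exists>z. E v z \<and> E z u \<and> u \<noteq> v)"
      using triangle_free by blast
    finally show ?thesis using True N_iff by blast
  next
    case False
    then show ?thesis by (simp add: neighbours_def)
  qed
  then have "{u \<in> V. dist V E v u = 2} = (\<Union>z \<in> ?N v. ?N z - {v})" by blast
  also have "card \<dots> = (\<Sum>z \<in> ?N v. card (?N z - {v}))"
  proof (rule card_UN_disjoint)
    show "finite (?N v)" "\<forall>z \<in> ?N v. finite (?N z - {v})"
      using fin by (simp_all add: neighbours_def)
    show "\<forall>z \<in> ?N v. \<forall>z' \<in> ?N v. z \<noteq> z' \<longrightarrow> (?N z - {v}) \<inter> (?N z' - {v}) = {}"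
    proof (intro ballI impI equals0I)
      fix z z' u assume "z \<in> ?N v" "z' \<in> ?N v" "z \<noteq> z'" "u \<in> (?N z - {v}) \<inter> (?N z' - {v})"
      then show False
        using unique_common_neighbour[of u v z z'] N_iff simple_graph_sym[OF G] by auto
    qed
  qed
  also have "\<dots> = (\<Sum>z \<in> ?N v. r - 1)"
  proof (rule sum.cong)
    fix z assume "z \<in> ?N v"
    then have "z \<in> V" "v \<in> ?N z" using N_iff simple_graph_sym[OF G] by (auto simp: neighbours_def)
    then show "card (?N z - {v}) = r - 1"
      using card_neighbours_regular[OF assms(3)] by simp
  qed simp
  also have "\<dots> = r * (r - 1)"
    using card_neighbours_regular[OF assms(3,4)] by simp
  finally show ?thesis .
qed

lemma subseq_index_embedding:
  "subseq xs ys \<Longrightarrow> \<exists>f. (\<forall>i < length xs. f i < length ys \<and> xs ! i = ys ! f i)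
     \<and> (\<forall>i j. i < j \<longrightarrow> j < length xs \<longrightarrow> f i < f j)"
proof (induction xs ys rule: list_emb.induct)
  case (list_emb_Nil ys)
  then show ?case by auto
next
  case (list_emb_Cons xs ys y)
  then obtain f where "\<forall>i < length xs. f i < length ys \<and> xs ! i = ys ! f i"
    and "\<forall>i j. i < j \<longrightarrow> j < length xs \<longrightarrow> f i < f j" by blast
  then show ?case by (intro exI[of _ "\<lambda>i. Suc (f i)"]) auto
next
  case (list_emb_Cons2 x y xs ys)
  then obtain f where f: "\<forall>i < length xs. f i < length ys \<and> xs ! i = ys ! f i"
    and mono: "\<forall>i j. i < j \<longrightarrow> j < length xs \<longrightarrow> f i < f j" by blast
  let ?g = "\<lambda>i. case i of 0 \<Rightarrow> 0 | Suc k \<Rightarrow> Suc (f k)"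
  have "\<forall>i < length (x # xs). ?g i < length (y # ys) \<and> (x # xs) ! i = (y # ys) ! ?g i"
    using f list_emb_Cons2.hyps(1) by (auto split: nat.splits)
  moreover have "\<forall>i j. i < j \<longrightarrow> j < length (x # xs) \<longrightarrow> ?g i < ?g j"
    using mono by (auto split: nat.splits)
  ultimately show ?case by blast
qed

definition cycle_at :: "'a list \<Rightarrow> nat \<Rightarrow> 'a" where
  "cycle_at c j = c ! (j mod length c)"

lemma cycle_at_add_length [simp]: "cycle_at c (j + length c) = cycle_at c j"
  by (simp add: cycle_at_def)

lemma is_cycle_length_pos: "is_cycle V E c \<Longrightarrow> 0 < length c"
  unfolding is_cycle_def by linarith

lemma cycle_at_edge:
  assumes c: "is_cycle V E c"
  shows "E (cycle_at c j) (cycle_at c (Suc j))"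
proof -
  have "j mod length c < length c" using is_cycle_length_pos[OF c] by simp
  then have "E (c ! (j mod length c)) (c ! (Suc (j mod length c) mod length c))"
    using c by (simp add: is_cycle_def)
  then show ?thesis by (simp add: cycle_at_def mod_Suc_eq)
qed

lemma cycle_at_inj:
  assumes c: "is_cycle V E c" and "j < k" "k < j + length c"
  shows "cycle_at c j \<noteq> cycle_at c k"
proof
  assume "cycle_at c j = cycle_at c k"
  moreover have "j mod length c < length c" "k mod length c < length c"
    using is_cycle_length_pos[OF c] by simp_all
  ultimately have "j mod length c = k mod length c"
    using c nth_eq_iff_index_eq unfolding is_cycle_def cycle_at_def by blast
  then have "length c dvd k - j"
    using \<open>j < k\<close> by (metis less_imp_le mod_eq_dvd_iff_nat)
  moreover have "0 < k - j" "k - j < length c" using assms(2,3) by linarith+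
  ultimately show False by (simp add: nat_dvd_not_less)
qed

lemma cycle_at_edges_inj:
  assumes c: "is_cycle V E c" and "j < k" "k < j + length c"
  shows "{cycle_at c j, cycle_at c (Suc j)} \<noteq> {cycle_at c k, cycle_at c (Suc k)}"
proof
  assume same: "{cycle_at c j, cycle_at c (Suc j)} = {cycle_at c k, cycle_at c (Suc k)}"
  have "cycle_at c j \<noteq> cycle_at c k" using cycle_at_inj[OF assms] .
  then have "cycle_at c j = cycle_at c (Suc k)" "cycle_at c (Suc j) = cycle_at c k"
    using same by (auto simp: doubleton_eq_iff)
  moreover have "3 \<le> length c" using c by (simp add: is_cycle_def)
  ultimately show False
    using cycle_at_inj[OF c, of "Suc j" k] cycle_at_inj[OF c, of j "Suc k"] assms(2,3)
    by (cases "k = Suc j") auto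
qed

lemma k_ordered_4_cycle_positions:
  assumes ord: "k_ordered V E 4" and "distinct [x1, x2, x3, x4]" "set [x1, x2, x3, x4] \<subseteq> V"
  obtains c i1 i2 i3 i4 where "is_cycle V E c" "i1 < i2" "i2 < i3" "i3 < i4" "i4 < i1 + length c"
    "cycle_at c i1 = x1" "cycle_at c i2 = x2" "cycle_at c i3 = x3" "cycle_at c i4 = x4"
proof -
  obtain c r where c: "is_cycle V E c" and sub: "subseq [x1, x2, x3, x4] (rotate r c)"
    using ord[unfolded k_ordered_def, rule_format, of "[x1, x2, x3, x4]"] assms(2,3)
    unfolding cycle_contains_in_order_def by auto
  obtain f
    where f: "\<forall>i < length [x1, x2, x3, x4].
      f i < length (rotate r c) \<and> [x1, x2, x3, x4] ! i = rotate r c ! f i"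
    and mono: "\<forall>i j. i < j \<longrightarrow> j < length [x1, x2, x3, x4] \<longrightarrow> f i < f j"
    using subseq_index_embedding[OF sub] by blast
  have at: "cycle_at c (r + f i) = [x1, x2, x3, x4] ! i" "f i < length c" if "i < 4" for i
    using f that by (simp_all add: cycle_at_def nth_rotate)
  show thesis
  proof (rule that[of c "r + f 0" "r + f 1" "r + f 2" "r + f 3"])
    show "r + f 3 < r + f 0 + length c" using at(2)[of 3] by simp
  qed (use c mono at(1)[of 0] at(1)[of 1] at(1)[of 2] at(1)[of 3] in simp_all)
qed

lemma ex_change_point: "a < b \<Longrightarrow> P a \<noteq> P b \<Longrightarrow> \<exists>j. a \<le> j \<and> j < b \<and> P j \<noteq> P (Suc j)"
proof (induction b)
  case 0
  then show ?case by simp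
next
  case (Suc b)
  show ?case
  proof (cases "P a = P b")
    case True
    then show ?thesis using Suc.prems by (intro exI[of _ b]) auto
  next
    case False
    then have "a < b" using Suc.prems by (metis less_SucE)
    then show ?thesis using Suc.IH False by (meson less_SucI)
  qed
qed

definition edge_boundary :: "('a \<Rightarrow> 'a \<Rightarrow> bool) \<Rightarrow> 'a set \<Rightarrow> 'a set set" where
  "edge_boundary E S = {{u, w} | u w. u \<in> S \<and> w \<notin> S \<and> E u w}"

lemma finite_edge_boundary:
  assumes "simple_graph V E"
  shows "finite (edge_boundary E S)"
proof -
  have "edge_boundary E S \<subseteq> (\<lambda>(u, w). {u, w}) ` (V \<times> V)"
    using simple_graph_edge_in_vertices[OF assms] unfolding edge_boundary_def by fast
  moreover have "finite V" using assms by (simp add: simple_graph_def)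
  ultimately show ?thesis by (meson finite_SigmaI finite_imageI finite_subset)
qed

lemma k_ordered_4_edge_boundary_ge_4:
  assumes G: "simple_graph V E" and ord: "k_ordered V E 4"
    and "x \<in> S" "y \<in> S" "x \<noteq> y" "p \<in> V - S" "q \<in> V - S" "p \<noteq> q" "S \<subseteq> V"
  shows "4 \<le> card (edge_boundary E S)"
proof -
  have "distinct [x, p, y, q]" "set [x, p, y, q] \<subseteq> V" using assms(3-9) by auto
  then obtain c i1 i2 i3 i4 where c: "is_cycle V E c"
    and i: "i1 < i2" "i2 < i3" "i3 < i4" "i4 < i1 + length c"
    and at: "cycle_at c i1 = x" "cycle_at c i2 = p" "cycle_at c i3 = y" "cycle_at c i4 = q"
    using k_ordered_4_cycle_positions[OF ord] by metis
  have at_end: "cycle_at c (i1 + length c) = x" using at(1) by simp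
  let ?inside = "\<lambda>j. cycle_at c j \<in> S"
  let ?edge = "\<lambda>j. {cycle_at c j, cycle_at c (Suc j)}"
  have crossing: "?edge j \<in> edge_boundary E S" if "?inside j \<noteq> ?inside (Suc j)" for j
    using that cycle_at_edge[OF c, of j] simple_graph_sym[OF G] unfolding edge_boundary_def
    by (cases "?inside j") (auto simp: insert_commute)
  obtain j1 j2 j3 j4 where
    j: "i1 \<le> j1" "j1 < i2" "i2 \<le> j2" "j2 < i3" "i3 \<le> j3" "j3 < i4" "i4 \<le> j4" "j4 < i1 + length c"
    and cross: "?inside j1 \<noteq> ?inside (Suc j1)" "?inside j2 \<noteq> ?inside (Suc j2)"
      "?inside j3 \<noteq> ?inside (Suc j3)" "?inside j4 \<noteq> ?inside (Suc j4)"
    using ex_change_point[of i1 i2 ?inside] ex_change_point[of i2 i3 ?inside]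
      ex_change_point[of i3 i4 ?inside] ex_change_point[of i4 "i1 + length c" ?inside]
      i at at_end assms(3-7) by auto
  have "card {?edge j1, ?edge j2, ?edge j3, ?edge j4} = 4"
    using cycle_at_edges_inj[OF c] j by auto
  moreover have "{?edge j1, ?edge j2, ?edge j3, ?edge j4} \<subseteq> edge_boundary E S"
    using crossing cross by auto
  ultimately show ?thesis using card_mono[OF finite_edge_boundary[OF G]] by metis
qed

lemma k_ordered_4_no_square_with_distinct_third_neighbours:
  assumes G: "simple_graph V E" and ord: "k_ordered V E 4"
    and "distinct [v, w, v', w']" "set [v, w, v', w'] \<subseteq> V"
    and Nv: "neighbours V E v = {a, b, v'}" and Nw: "neighbours V E w = {a, b, w'}"
  shows False
proof -
  obtain c i1 i2 i3 i4 where c: "is_cycle V E c"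
    and i: "i1 < i2" "i2 < i3" "i3 < i4" "i4 < i1 + length c"
    and at: "cycle_at c i1 = v" "cycle_at c i2 = w" "cycle_at c i3 = v'" "cycle_at c i4 = w'"
    using k_ordered_4_cycle_positions[OF ord assms(3,4)] by metis
  let ?m = "length c"
  have inj: "cycle_at c j \<noteq> cycle_at c k" if "i1 \<le> j" "j < k" "k < i1 + ?m" for j k
    using cycle_at_inj[OF c] that by simp
  have "Suc (i1 + ?m - 1) = i1 + ?m" using i by simp
  then have "E v (cycle_at c (i1 + ?m - 1))"
    using cycle_at_edge[OF c, of "i1 + ?m - 1"] at(1) simple_graph_sym[OF G] by simp
  moreover have "E v (cycle_at c (Suc i1))" "E w (cycle_at c (Suc i2))"
    using cycle_at_edge[OF c] at by metis+
  moreover have "cycle_at c (Suc i1) \<noteq> v'" "v' \<noteq> cycle_at c (i1 + ?m - 1)"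
    "cycle_at c (Suc i2) \<noteq> w'"
    using inj[of "Suc i1" i3] inj[of i3 "i1 + ?m - 1"] inj[of "Suc i2" i4] i at(3,4) by simp_all
  ultimately have "cycle_at c (Suc i1) \<in> {a, b}" "cycle_at c (i1 + ?m - 1) \<in> {a, b}"
    "cycle_at c (Suc i2) \<in> {a, b}"
    using Nv Nw mem_neighbours_iff[OF G] by blast+
  moreover have "cycle_at c (Suc i1) \<noteq> cycle_at c (Suc i2)"
    "cycle_at c (Suc i1) \<noteq> cycle_at c (i1 + ?m - 1)"
    "cycle_at c (Suc i2) \<noteq> cycle_at c (i1 + ?m - 1)"
    using inj[of "Suc i1" "Suc i2"] inj[of "Suc i1" "i1 + ?m - 1"] inj[of "Suc i2" "i1 + ?m - 1"] i
    by auto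
  ultimately show False by auto
qed

lemma card_le_3_if_subset:
  assumes "A \<subseteq> {a, b, c}"
  shows "card A \<le> 3"
proof -
  have "card A \<le> card {a, b, c}" using assms by (simp add: card_mono)
  also have "\<dots> \<le> 3" by (simp add: card_insert_if)
  finally show ?thesis .
qed

locale four_ordered_cubic_graph =
  fixes V :: "'a set" and E :: "'a \<Rightarrow> 'a \<Rightarrow> bool"
  assumes simple: "simple_graph V E" and cubic: "regular V E 3"
    and four_ordered: "k_ordered V E 4" and more_than_six_vertices: "6 < card V"
begin

lemma sym: "E x y \<Longrightarrow> E y x"
  using simple_graph_sym[OF simple] .

lemma irrefl: "\<not> E x x"
  using simple by (simp add: simple_graph_def)

lemma edge_in_vertices: "E x y \<Longrightarrow> x \<in> V \<and> y \<in> V"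
  using simple_graph_edge_in_vertices[OF simple] .

lemma edge_iff_mem_neighbours: "neighbours V E x = N \<Longrightarrow> E x y \<longleftrightarrow> y \<in> N"
  using mem_neighbours_iff[OF simple] by blast

lemma neighbours_eq_insert_pair:
  assumes "E x a" "E x b" "a \<noteq> b"
  obtains c where "neighbours V E x = {a, b, c}" "c \<noteq> a" "c \<noteq> b"
proof -
  let ?N = "neighbours V E x"
  have "a \<in> ?N" "b \<in> ?N" using assms mem_neighbours_iff[OF simple] by blast+
  moreover have "card ?N = 3"
    using card_neighbours_regular[OF cubic] edge_in_vertices[OF assms(1)] by blast
  moreover from this have "finite ?N" by (intro card_ge_0_finite) simp
  ultimately have "card (?N - {a, b}) = 1" using assms(3) by (simp add: card_Diff_subset)
  then obtain c where "?N - {a, b} = {c}" by (auto simp: card_1_singleton_iff)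
  with \<open>a \<in> ?N\<close> \<open>b \<in> ?N\<close> show thesis by (intro that[of c]) auto
qed

lemma edge_boundary_ge_4:
  assumes "S \<subseteq> V" "card S \<le> 5" "x \<in> S" "y \<in> S" "x \<noteq> y"
  shows "4 \<le> card (edge_boundary E S)"
proof -
  have "finite V" using simple by (simp add: simple_graph_def)
  then have "2 \<le> card (V - S)"
    using assms(1,2) more_than_six_vertices by (simp add: card_Diff_subset finite_subset)
  then obtain p q where "p \<in> V - S" "q \<in> V - S" "p \<noteq> q"
    by (metis obtain_subset_with_card_n card_2_iff insert_subset)
  then show ?thesis
    using k_ordered_4_edge_boundary_ge_4[OF simple four_ordered] assms by blast
qed

lemma no_triangle: "E x y \<Longrightarrow> E y z \<Longrightarrow> \<not> E x z"
proof
  assume xy: "E x y" and yz: "E y z" and xz: "E x z"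
  then have "x \<noteq> y" "y \<noteq> z" "x \<noteq> z" using irrefl by metis+
  obtain x' where Nx: "neighbours V E x = {y, z, x'}"
    using neighbours_eq_insert_pair[OF xy xz \<open>y \<noteq> z\<close>] .
  obtain y' where Ny: "neighbours V E y = {x, z, y'}"
    using neighbours_eq_insert_pair[OF sym[OF xy] yz \<open>x \<noteq> z\<close>] .
  obtain z' where Nz: "neighbours V E z = {x, y, z'}"
    using neighbours_eq_insert_pair[OF sym[OF xz] sym[OF yz] \<open>x \<noteq> y\<close>] .
  have "edge_boundary E {x, y, z} \<subseteq> {{x, x'}, {y, y'}, {z, z'}}"
    using edge_iff_mem_neighbours[OF Nx] edge_iff_mem_neighbours[OF Ny]
      edge_iff_mem_neighbours[OF Nz]
    unfolding edge_boundary_def by auto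
  then have "card (edge_boundary E {x, y, z}) \<le> 3" by (rule card_le_3_if_subset)
  moreover have "4 \<le> card (edge_boundary E {x, y, z})"
    using edge_boundary_ge_4[of "{x, y, z}" x y] edge_in_vertices xy yz \<open>x \<noteq> y\<close>
    by (simp add: card_insert_if)
  ultimately show False by simp
qed

lemma neighbours_eq_triple:
  assumes "distinct [a, b, c]" "E x a" "E x b" "E x c"
  shows "neighbours V E x = {a, b, c}"
proof -
  obtain d where "neighbours V E x = {a, b, d}"
    using neighbours_eq_insert_pair[of x a b] assms by auto
  with assms show ?thesis using edge_iff_mem_neighbours by auto
qed

lemma no_three_common_neighbours:
  assumes "v \<noteq> w" "distinct [a, b, c]" "E v a" "E v b" "E v c" "E w a" "E w b" "E w c"
  shows False
proof -
  have Nv: "neighbours V E v = {a, b, c}" and Nw: "neighbours V E w = {a, b, c}"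
    using neighbours_eq_triple assms by simp_all
  obtain a' where Na: "neighbours V E a = {v, w, a'}"
    using neighbours_eq_insert_pair[OF sym[OF assms(3)] sym[OF assms(6)] assms(1)] .
  obtain b' where Nb: "neighbours V E b = {v, w, b'}"
    using neighbours_eq_insert_pair[OF sym[OF assms(4)] sym[OF assms(7)] assms(1)] .
  obtain c' where Nc: "neighbours V E c = {v, w, c'}"
    using neighbours_eq_insert_pair[OF sym[OF assms(5)] sym[OF assms(8)] assms(1)] .
  let ?S = "{v, w, a, b, c}"
  have "{u, x} \<in> {{a, a'}, {b, b'}, {c, c'}}" if "u \<in> ?S" "x \<notin> ?S" "E u x" for u x
  proof -
    from that(1) consider "u = v" | "u = w" | "u = a" | "u = b" | "u = c" by blast
    then show ?thesis
      using that(2,3) edge_iff_mem_neighbours[OF Nv] edge_iff_mem_neighbours[OF Nw]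
        edge_iff_mem_neighbours[OF Na] edge_iff_mem_neighbours[OF Nb] edge_iff_mem_neighbours[OF Nc]
      by cases auto
  qed
  then have "edge_boundary E ?S \<subseteq> {{a, a'}, {b, b'}, {c, c'}}"
    unfolding edge_boundary_def by blast
  then have "card (edge_boundary E ?S) \<le> 3" by (rule card_le_3_if_subset)
  moreover have "4 \<le> card (edge_boundary E ?S)"
    using edge_boundary_ge_4[of ?S v w] edge_in_vertices assms(1,3-8)
    by (simp add: card_insert_if)
  ultimately show False by simp
qed

lemma common_neighbour_unique:
  assumes "v \<noteq> w" "E v a" "E w a" "E v b" "E w b"
  shows "a = b"
proof (rule ccontr)
  assume "a \<noteq> b"
  have "\<not> E v w" using no_triangle[OF assms(2) sym[OF assms(3)]] .
  obtain v' where Nv: "neighbours V E v = {a, b, v'}" "v' \<noteq> a" "v' \<noteq> b"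
    using neighbours_eq_insert_pair[OF assms(2,4) \<open>a \<noteq> b\<close>] .
  obtain w' where Nw: "neighbours V E w = {a, b, w'}"
    using neighbours_eq_insert_pair[OF assms(3,5) \<open>a \<noteq> b\<close>] .
  have "E v v'" "E w w'"
    using edge_iff_mem_neighbours[OF Nv(1)] edge_iff_mem_neighbours[OF Nw] by simp_all
  show False
  proof (cases "v' = w'")
    case True
    then show False
      using no_three_common_neighbours[of v w a b v'] assms Nv \<open>a \<noteq> b\<close> \<open>E v v'\<close> \<open>E w w'\<close>
      by simp
  next
    case False
    have "distinct [v, w, v', w']"
      using False assms(1) \<open>E v v'\<close> \<open>E w w'\<close> \<open>\<not> E v w\<close> irrefl sym by auto
    moreover have "set [v, w, v', w'] \<subseteq> V"
      using edge_in_vertices \<open>E v v'\<close> \<open>E w w'\<close> by auto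
    ultimately show False
      using k_ordered_4_no_square_with_distinct_third_neighbours[OF simple four_ordered _ _ Nv(1) Nw]
      by blast
  qed
qed

end

theorem corollary2p2:
  fixes V :: "'a set" and E :: "'a \<Rightarrow> 'a \<Rightarrow> bool"
  assumes "simple_graph V E"
    and "connected V E"
    and "regular V E 3"
    and "card V > 6"
    and "k_ordered V E 4"
  shows "\<forall>v\<in>V. card {u \<in> V. dist V E v u = 2} = 6"
proof
  fix v assume "v \<in> V"
  interpret four_ordered_cubic_graph V E
    using assms by unfold_locales
  show "card {u \<in> V. dist V E v u = 2} = 6"
    using card_dist_2_regular_girth_ge_5[OF assms(1-3) \<open>v \<in> V\<close>
        no_triangle common_neighbour_unique]
    by simp
qed

end
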